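(* Let $\{P^{[s,t]}_{ij,k}\}$, with initial point $x^{(0)}\in S$, be a discrete time quadratic stochastic process of type (A) or of type (B). Suppose there exist $k_0\in\mathbb{N}$ and a sequence $(\lambda_n)_{n\ge1}$ with $0<\lambda_n<1$, satisfying $\sum_n\lambda_n=\infty$ and $\sum_{j=1}^n\frac{\prod_{k=1}^n(1-\lambda_k)}{1-\lambda_j}\to0$ as $n\to\infty$, such that $P^{[n-1,n]}_{ij,k_0}\ge\lambda_n$ for all $i,j\in\mathbb{N}$ and all $n\ge1$. Then the q.s.p. satisfies the ergodic principle, i.e. $\lim_{n\to\infty}|P^{[m,n]}_{ij,k}-P^{[m,n]}_{uv,k}|=0$ for all $i,j,u,v,k,m$.
   Context: $\mathbb{N}=\{1,2,\dots\}$; times are nonnegative integers. $\ell^1$ is the space of real sequences $x=(x_n)_{n\in\mathbb{N}}$ with $\|x\|_1=\sum_n|x_n|<\infty$, and $S=\{x\in\ell^1:x_n\ge0,\ \|x\|_1=1\}$. A discrete time quadratic stochastic process (q.s.p.) consists of an initial point $x^{(0)}\in S$ and numbers $P^{[s,t]}_{ij,k}$ ($i,j,k\in\mathbb{N}$; $s,t$ nonnegative integers with $t-s\ge1$) such that for all $s,t$: (1) $P^{[s,t]}_{ij,k}=P^{[s,t]}_{ji,k}$; (2) $P^{[s,t]}_{ij,k}\ge0$ and $\sum_{k}P^{[s,t]}_{ij,k}=1$; and (3) one of the following holds for all $s<r<t$: type (A): $P^{[s,t]}_{ij,k}=\sum_{m,l}P^{[s,r]}_{ij,m}P^{[r,t]}_{ml,k}x^{(r)}_l$;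 type (B): $P^{[s,t]}_{ij,k}=\sum_{m,l,g,h}P^{[s,r]}_{im,l}P^{[s,r]}_{jg,h}P^{[r,t]}_{lh,k}x^{(s)}_mx^{(s)}_g$. Here for $r\ge1$, $x^{(r)}_k=\sum_{i,j}P^{[0,r]}_{ij,k}x^{(0)}_ix^{(0)}_j$. *)

theory Defs
  imports "HOL-Analysis.Analysis"
begin

text \<open>Indices range over the positive naturals {1..}; times over nat.
  P s t i j k stands for P^{[s,t]}_{ij,k}; x0 k for x^{(0)}_k.\<close>

definition Npos :: "nat set" where "Npos = {1..}"

definition in_S :: "(nat \<Rightarrow> real) \<Rightarrow> bool" where
  "in_S x \<longleftrightarrow> (\<forall>n\<in>Npos. x n \<ge> 0) \<and> (x has_sum 1) Npos"

definition qsp_state ::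
  "(nat \<Rightarrow> nat \<Rightarrow> nat \<Rightarrow> nat \<Rightarrow> nat \<Rightarrow> real) \<Rightarrow> (nat \<Rightarrow> real) \<Rightarrow> nat \<Rightarrow> nat \<Rightarrow> real" where
  "qsp_state P x0 r k =
     (if r = 0 then x0 k
      else (\<Sum>\<^sub>\<infinity>(i,j)\<in>Npos \<times> Npos. P 0 r i j k * x0 i * x0 j))"

definition qsp_basic ::
  "(nat \<Rightarrow> nat \<Rightarrow> nat \<Rightarrow> nat \<Rightarrow> nat \<Rightarrow> real) \<Rightarrow> (nat \<Rightarrow> real) \<Rightarrow> bool" where
  "qsp_basic P x0 \<longleftrightarrow> in_S x0 \<and>
     (\<forall>s t. s < t \<longrightarrow> (\<forall>i\<in>Npos. \<forall>j\<in>Npos.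
        (\<forall>k\<in>Npos. P s t i j k = P s t j i k \<and> P s t i j k \<ge> 0) \<and>
        ((\<lambda>k. P s t i j k) has_sum 1) Npos))"

definition qsp_typeA ::
  "(nat \<Rightarrow> nat \<Rightarrow> nat \<Rightarrow> nat \<Rightarrow> nat \<Rightarrow> real) \<Rightarrow> (nat \<Rightarrow> real) \<Rightarrow> bool" where
  "qsp_typeA P x0 \<longleftrightarrow> qsp_basic P x0 \<and>
     (\<forall>s r t. s < r \<and> r < t \<longrightarrow> (\<forall>i\<in>Npos. \<forall>j\<in>Npos. \<forall>k\<in>Npos.
        ((\<lambda>(m,l). P s r i j m * P r t m l k * qsp_state P x0 r l) has_sum P s t i j k)
          (Npos \<times> Npos)))"

definition qsp_typeB ::
  "(nat \<Rightarrow> nat \<Rightarrow> nat \<Rightarrow> nat \<Rightarrow> nat \<Rightarrow> real) \<Rightarrow> (nat \<Rightarrow> real) \<Rightarrow> bool" where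
  "qsp_typeB P x0 \<longleftrightarrow> qsp_basic P x0 \<and>
     (\<forall>s r t. s < r \<and> r < t \<longrightarrow> (\<forall>i\<in>Npos. \<forall>j\<in>Npos. \<forall>k\<in>Npos.
        ((\<lambda>(m,l,g,h). P s r i m l * P s r j g h * P r t l h k
              * qsp_state P x0 s m * qsp_state P x0 s g)
          has_sum P s t i j k) (Npos \<times> Npos \<times> Npos \<times> Npos)))"

definition ergodic_principle ::
  "(nat \<Rightarrow> nat \<Rightarrow> nat \<Rightarrow> nat \<Rightarrow> nat \<Rightarrow> real) \<Rightarrow> bool" where
  "ergodic_principle P \<longleftrightarrow>
     (\<forall>i\<in>Npos. \<forall>j\<in>Npos. \<forall>u\<in>Npos. \<forall>v\<in>Npos. \<forall>k\<in>Npos. \<forall>m.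
        (\<lambda>n. \<bar>P m n i j k - P m n u v k\<bar>) \<longlonglongrightarrow> 0)"

end

theory Submission
  imports Defs
begin

(* Let D(m,n) bound |P^[m,n]_{ij,k} - P^[m,n]_{uj,k}| over all i, j, u.  Splitting at r = m+1 with
   the identity of type (A) or (B) writes P^[m,n]_{ij,k} as the average, under a probability weight
   depending on i, of a [0,1]-valued function whose oscillation is at most D(m+1,n).  The
   minorization P^[m,m+1]_{ij,k0} >= lam (m+1) gives all these weights a common part of mass
   lam (m+1), which cancels in differences: D(m,n) <= (1 - lam (m+1)) D(m+1,n), a Doeblin-type
   contraction.  Hence D(m,n) <= prod_{m<q<n} (1 - lam q), and the hypothesis on the sums forces
   prod_{k<=n} (1 - lam k) -> 0.  Symmetry in the lower indices handles changing both i and j. *)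

lemma nonneg_has_sum_SigmaI:
  fixes f :: "'a \<times> 'b \<Rightarrow> real"
  assumes "\<And>x. x \<in> A \<Longrightarrow> ((\<lambda>y. f (x, y)) has_sum g x) (B x)"
    and "(g has_sum S) A"
    and "\<And>x y. x \<in> A \<Longrightarrow> y \<in> B x \<Longrightarrow> 0 \<le> f (x, y)"
  shows "(f has_sum S) (Sigma A B)"
  using has_sum_SigmaI[OF assms(1,2)
      summable_on_SigmaI[OF assms(1) has_sum_imp_summable[OF assms(2)] assms(3)]] .

lemma has_sum_diff:
  fixes f g :: "'a \<Rightarrow> 'b::topological_ab_group_add"
  assumes "(f has_sum a) A" and "(g has_sum b) A"
  shows "((\<lambda>x. f x - g x) has_sum (a - b)) A"
  using has_sum_add[OF assms(1), of "\<lambda>x. - g x" "- b"] assms(2) by (simp add: has_sum_uminus)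

lemma has_sum_mult_unit_interval:
  fixes w F :: "'a \<Rightarrow> real"
  assumes w: "(w has_sum S) A" "\<And>a. a \<in> A \<Longrightarrow> 0 \<le> w a"
    and F: "\<And>a. a \<in> A \<Longrightarrow> 0 \<le> F a \<and> F a \<le> 1"
  shows "((\<lambda>a. w a * F a) has_sum (\<Sum>\<^sub>\<infinity>a\<in>A. w a * F a)) A"
    and "0 \<le> (\<Sum>\<^sub>\<infinity>a\<in>A. w a * F a)" and "(\<Sum>\<^sub>\<infinity>a\<in>A. w a * F a) \<le> S"
proof -
  have bounds: "0 \<le> w a * F a" "w a * F a \<le> w a" if "a \<in> A" for a
    using w(2)[OF that] F[OF that] by (auto intro: mult_right_le_one_le)
  have "(\<lambda>a. w a * F a) summable_on A"
    by (rule summable_on_comparison_test[OF has_sum_imp_summable[OF w(1)]]) (use bounds in auto)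
  then show sum: "((\<lambda>a. w a * F a) has_sum (\<Sum>\<^sub>\<infinity>a\<in>A. w a * F a)) A"
    by simp
  show "0 \<le> (\<Sum>\<^sub>\<infinity>a\<in>A. w a * F a)"
    by (rule has_sum_nonneg[OF sum]) (use bounds in auto)
  show "(\<Sum>\<^sub>\<infinity>a\<in>A. w a * F a) \<le> S"
    by (rule has_sum_mono[OF sum w(1)]) (use bounds in auto)
qed

lemma has_sum_mult_diff_le:
  fixes w F F' :: "'a \<Rightarrow> real"
  assumes w: "(w has_sum 1) A" "\<And>a. a \<in> A \<Longrightarrow> 0 \<le> w a"
    and "((\<lambda>a. w a * F a) has_sum X) A" and "((\<lambda>a. w a * F' a) has_sum X') A"
    and diff: "\<And>a. a \<in> A \<Longrightarrow> F a - F' a \<le> B"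
  shows "X - X' \<le> B"
proof (rule has_sum_mono[OF has_sum_diff[OF assms(3,4)]])
  show "((\<lambda>a. w a * B) has_sum B) A"
    using has_sum_cmult_left[OF w(1), of B] by simp
  show "w a * F a - w a * F' a \<le> w a * B" if "a \<in> A" for a
    using mult_left_mono[OF diff[OF that] w(2)[OF that]] by (simp add: right_diff_distrib)
qed

lemma kernel_mixture_has_sum:
  fixes \<mu> :: "'a \<Rightarrow> real" and K :: "'a \<Rightarrow> 'b \<Rightarrow> real"
  assumes \<mu>: "(\<mu> has_sum 1) A" "\<And>a. a \<in> A \<Longrightarrow> 0 \<le> \<mu> a"
    and K: "\<And>a. a \<in> A \<Longrightarrow> (K a has_sum 1) B" "\<And>a b. a \<in> A \<Longrightarrow> b \<in> B \<Longrightarrow> 0 \<le> K a b"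
  shows "((\<lambda>b. \<Sum>\<^sub>\<infinity>a\<in>A. \<mu> a * K a b) has_sum 1) B"
proof -
  have "((\<lambda>(a, b). \<mu> a * K a b) has_sum 1) (A \<times> B)"
  proof (rule nonneg_has_sum_SigmaI[where g=\<mu>])
    fix a assume a: "a \<in> A"
    show "((\<lambda>b. case (a, b) of (a, b) \<Rightarrow> \<mu> a * K a b) has_sum \<mu> a) B"
      using has_sum_cmult_right[OF K(1)[OF a], of "\<mu> a"] by simp
  next
    show "(\<mu> has_sum 1) A" by (fact \<mu>(1))
  next
    fix a b assume "a \<in> A" "b \<in> B"
    then show "0 \<le> (case (a, b) of (a, b) \<Rightarrow> \<mu> a * K a b)" by (simp add: \<mu>(2) K(2))
  qed
  then have joint: "((\<lambda>(b, a). \<mu> a * K a b) has_sum 1) (B \<times> A)"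
    using has_sum_swap[THEN iffD1] by fastforce
  show ?thesis
  proof (rule has_sum_Sigma'[OF joint])
    fix b assume "b \<in> B"
    with summable_on_SigmaD1[OF has_sum_imp_summable[OF joint]]
    show "((\<lambda>a. (\<lambda>(b, a). \<mu> a * K a b) (b, a)) has_sum (\<Sum>\<^sub>\<infinity>a\<in>A. \<mu> a * K a b)) A"
      by simp
  qed
qed

lemma minorized_mixture_diff_le:
  fixes w w' \<mu> G :: "'a \<Rightarrow> real"
  assumes w: "(w has_sum 1) I" and w': "(w' has_sum 1) I"
    and \<mu>: "(\<mu> has_sum L) I" "\<And>c. c \<in> I \<Longrightarrow> 0 \<le> \<mu> c \<and> \<mu> c \<le> w c \<and> \<mu> c \<le> w' c"
    and G: "\<And>c. c \<in> I \<Longrightarrow> 0 \<le> G c \<and> G c \<le> 1"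
    and osc: "\<And>c c'. c \<in> I \<Longrightarrow> c' \<in> I \<Longrightarrow> G c - G c' \<le> D"
    and X: "((\<lambda>c. w c * G c) has_sum X) I" and X': "((\<lambda>c. w' c * G c) has_sum X') I"
    and "I \<noteq> {}"
  shows "X - X' \<le> (1 - L) * D"
proof -
  define C where "C = (\<Sum>\<^sub>\<infinity>c\<in>I. \<mu> c * G c)"
  have C: "((\<lambda>c. \<mu> c * G c) has_sum C) I"
    unfolding C_def by (rule has_sum_mult_unit_interval(1)[OF \<mu>(1)]) (use \<mu>(2) G in auto)
  define M where "M = (SUP c\<in>I. G c)"
  have "bdd_above (G ` I)"
    using G by (intro bdd_aboveI2[where M=1]) auto
  then have le_M: "G c \<le> M" if "c \<in> I" for c
    unfolding M_def using that by (rule cSUP_upper[rotated])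
  have M_le: "M - D \<le> G c'" if c': "c' \<in> I" for c'
  proof -
    have "M \<le> G c' + D"
      unfolding M_def by (rule cSUP_least[OF \<open>I \<noteq> {}\<close>]) (use osc c' in force)
    then show ?thesis by simp
  qed
  have "X - C \<le> (1 - L) * M"
  proof (rule has_sum_mono[OF has_sum_diff[OF X C]])
    show "((\<lambda>c. (w c - \<mu> c) * M) has_sum (1 - L) * M) I"
      by (intro has_sum_cmult_left has_sum_diff w \<mu>(1))
    show "w c * G c - \<mu> c * G c \<le> (w c - \<mu> c) * M" if "c \<in> I" for c
      using mult_left_mono[OF le_M[OF that], of "w c - \<mu> c"] \<mu>(2)[OF that]
      by (simp add: left_diff_distrib)
  qed
  moreover have "(1 - L) * (M - D) \<le> X' - C"
  proof (rule has_sum_mono[OF _ has_sum_diff[OF X' C]])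
    show "((\<lambda>c. (w' c - \<mu> c) * (M - D)) has_sum (1 - L) * (M - D)) I"
      by (intro has_sum_cmult_left has_sum_diff w' \<mu>(1))
    show "(w' c - \<mu> c) * (M - D) \<le> w' c * G c - \<mu> c * G c" if "c \<in> I" for c
      using mult_left_mono[OF M_le[OF that], of "w' c - \<mu> c"] \<mu>(2)[OF that]
      by (simp add: left_diff_distrib)
  qed
  ultimately show ?thesis by (simp add: algebra_simps)
qed

lemma qsp_basic_in_S: "qsp_basic P x0 \<Longrightarrow> in_S x0"
  by (simp add: qsp_basic_def)

lemma qsp_basic_has_sum:
  assumes "qsp_basic P x0" and "s < t" and "i \<in> Npos" and "j \<in> Npos"
  shows "((\<lambda>k. P s t i j k) has_sum 1) Npos"
  using assms unfolding qsp_basic_def by blast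

lemma qsp_basic_nonneg:
  assumes "qsp_basic P x0" and "s < t" and "i \<in> Npos" and "j \<in> Npos" and "k \<in> Npos"
  shows "0 \<le> P s t i j k"
  using assms unfolding qsp_basic_def by blast

lemma qsp_basic_sym:
  assumes "qsp_basic P x0" and "s < t" and "i \<in> Npos" and "j \<in> Npos" and "k \<in> Npos"
  shows "P s t i j k = P s t j i k"
  using assms unfolding qsp_basic_def by blast

lemma qsp_basic_le_one:
  assumes "qsp_basic P x0" and "s < t" and "i \<in> Npos" and "j \<in> Npos" and "k \<in> Npos"
  shows "P s t i j k \<le> 1"
proof -
  have "(\<Sum>k'\<in>{k}. P s t i j k') \<le> 1"
    by (rule finite_sum_le_has_sum[OF qsp_basic_has_sum[OF assms(1-4)]])
      (use assms qsp_basic_nonneg in auto)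
  then show ?thesis by simp
qed

lemma qsp_state_nonneg:
  assumes "qsp_basic P x0" and "k \<in> Npos"
  shows "0 \<le> qsp_state P x0 r k"
proof -
  have "\<forall>i\<in>Npos. 0 \<le> x0 i"
    using qsp_basic_in_S[OF assms(1)] by (simp add: in_S_def)
  then show ?thesis
    unfolding qsp_state_def
    by (auto intro!: infsum_nonneg mult_nonneg_nonneg qsp_basic_nonneg[OF assms(1)] assms(2))
qed

lemma qsp_state_has_sum:
  assumes "qsp_basic P x0"
  shows "(qsp_state P x0 r has_sum 1) Npos"
proof (cases "r = 0")
  case True
  then have "qsp_state P x0 r = x0"
    by (simp add: qsp_state_def fun_eq_iff)
  then show ?thesis
    using qsp_basic_in_S[OF assms] by (simp add: in_S_def)
next
  case False
  have x0: "(x0 has_sum 1) Npos" "\<And>i. i \<in> Npos \<Longrightarrow> 0 \<le> x0 i"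
    using qsp_basic_in_S[OF assms] by (auto simp: in_S_def)
  have "qsp_state P x0 r =
      (\<lambda>k. \<Sum>\<^sub>\<infinity>p\<in>Npos \<times> Npos. (case p of (i, j) \<Rightarrow> x0 i * x0 j) * P 0 r (fst p) (snd p) k)"
    (is "_ = ?mixture")
    using False by (auto simp: qsp_state_def fun_eq_iff case_prod_unfold mult_ac)
  moreover have "((\<lambda>(i, j). x0 i * x0 j) has_sum 1) (Npos \<times> Npos)"
    by (rule nonneg_has_sum_SigmaI[OF _ x0(1)])
      (use has_sum_cmult_right[OF x0(1)] x0(2) in auto)
  then have "(?mixture has_sum 1) Npos"
    by (rule kernel_mixture_has_sum)
      (use False x0(2) in \<open>auto intro: qsp_basic_has_sum[OF assms] qsp_basic_nonneg[OF assms]\<close>)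
  ultimately show ?thesis by simp
qed

lemma typeA_step_diff_le:
  assumes TA: "qsp_typeA P x0" and n: "Suc m < n" and k: "k \<in> Npos" and k0: "k0 \<in> Npos"
    and minor: "\<And>a b. a \<in> Npos \<Longrightarrow> b \<in> Npos \<Longrightarrow> L \<le> P m (Suc m) a b k0" and "0 \<le> L"
    and osc: "\<And>a b c. a \<in> Npos \<Longrightarrow> b \<in> Npos \<Longrightarrow> c \<in> Npos \<Longrightarrow>
      P (Suc m) n a b k - P (Suc m) n c b k \<le> B"
    and i: "i \<in> Npos" and j: "j \<in> Npos" and u: "u \<in> Npos"
  shows "P m n i j k - P m n u j k \<le> (1 - L) * B"
proof -
  have basic: "qsp_basic P x0"
    using TA by (simp add: qsp_typeA_def)
  define x where "x = qsp_state P x0 (Suc m)"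
  have x: "(x has_sum 1) Npos" "\<And>l. l \<in> Npos \<Longrightarrow> 0 \<le> x l"
    unfolding x_def using qsp_state_has_sum qsp_state_nonneg basic by auto
  define G where "G a = (\<Sum>\<^sub>\<infinity>l\<in>Npos. x l * P (Suc m) n a l k)" for a
  have G: "((\<lambda>l. x l * P (Suc m) n a l k) has_sum G a) Npos" "0 \<le> G a" "G a \<le> 1"
    if a: "a \<in> Npos" for a
  proof -
    have "0 \<le> P (Suc m) n a l k \<and> P (Suc m) n a l k \<le> 1" if "l \<in> Npos" for l
      using qsp_basic_nonneg[OF basic n a that k] qsp_basic_le_one[OF basic n a that k] by simp
    from has_sum_mult_unit_interval[OF x this] show
      "((\<lambda>l. x l * P (Suc m) n a l k) has_sum G a) Npos" "0 \<le> G a" "G a \<le> 1"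
      unfolding G_def by simp_all
  qed
  have mixture: "((\<lambda>a. P m (Suc m) i' j a * G a) has_sum P m n i' j k) Npos"
    if i': "i' \<in> Npos" for i'
  proof (rule has_sum_Sigma')
    show "((\<lambda>(a, l). P m (Suc m) i' j a * P (Suc m) n a l k * x l) has_sum P m n i' j k)
        (Npos \<times> Npos)"
      using TA n i' j k unfolding qsp_typeA_def x_def by auto
    show "((\<lambda>l. (\<lambda>(a, l). P m (Suc m) i' j a * P (Suc m) n a l k * x l) (a, l))
        has_sum P m (Suc m) i' j a * G a) Npos" if "a \<in> Npos" for a
      using has_sum_cmult_right[OF G(1)[OF that], of "P m (Suc m) i' j a"] by (simp add: mult_ac)
  qed
  show ?thesis
  proof (rule minorized_mixture_diff_le[where \<mu>="\<lambda>a. if a = k0 then L else 0"])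
    show "(P m (Suc m) i j has_sum 1) Npos" "(P m (Suc m) u j has_sum 1) Npos"
      using qsp_basic_has_sum[OF basic] i j u by auto
    show "((\<lambda>a. if a = k0 then L else 0) has_sum L) Npos"
      by (rule has_sum_finite_neutralI[of "{k0}"]) (use k0 in auto)
    show "0 \<le> (if a = k0 then L else 0) \<and> (if a = k0 then L else 0) \<le> P m (Suc m) i j a
        \<and> (if a = k0 then L else 0) \<le> P m (Suc m) u j a" if "a \<in> Npos" for a
      using that minor i j u \<open>0 \<le> L\<close> qsp_basic_nonneg[OF basic lessI] by auto
    show "G a - G a' \<le> B" if "a \<in> Npos" "a' \<in> Npos" for a a'
      by (rule has_sum_mult_diff_le[OF x G(1) G(1)]) (use that osc in auto)
  qed (use G mixture i u k in auto)
qed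

lemma typeB_step_diff_le:
  assumes TB: "qsp_typeB P x0" and n: "Suc m < n" and k: "k \<in> Npos" and k0: "k0 \<in> Npos"
    and minor: "\<And>a b. a \<in> Npos \<Longrightarrow> b \<in> Npos \<Longrightarrow> L \<le> P m (Suc m) a b k0" and "0 \<le> L"
    and osc: "\<And>a b c. a \<in> Npos \<Longrightarrow> b \<in> Npos \<Longrightarrow> c \<in> Npos \<Longrightarrow>
      P (Suc m) n a b k - P (Suc m) n c b k \<le> B"
    and i: "i \<in> Npos" and j: "j \<in> Npos" and u: "u \<in> Npos"
  shows "P m n i j k - P m n u j k \<le> (1 - L) * B"
proof -
  have basic: "qsp_basic P x0"
    using TB by (simp add: qsp_typeB_def)
  define x where "x = qsp_state P x0 m"
  have x: "(x has_sum 1) Npos" "\<And>l. l \<in> Npos \<Longrightarrow> 0 \<le> x l"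
    unfolding x_def using qsp_state_has_sum qsp_state_nonneg basic by auto
  define W where "W i' = (\<lambda>(a, l). x a * P m (Suc m) i' a l)" for i'
  have W_nonneg: "0 \<le> W i' p" if "i' \<in> Npos" "p \<in> Npos \<times> Npos" for i' p
    using that x(2) qsp_basic_nonneg[OF basic lessI] by (auto simp: W_def)
  have W: "(W i' has_sum 1) (Npos \<times> Npos)" if i': "i' \<in> Npos" for i'
  proof (rule nonneg_has_sum_SigmaI[OF _ x(1)])
    show "((\<lambda>l. W i' (a, l)) has_sum x a) Npos" if "a \<in> Npos" for a
      using has_sum_cmult_right[OF qsp_basic_has_sum[OF basic lessI i' that], of "x a"]
      by (simp add: W_def)
  qed (use W_nonneg i' in auto)
  define G where "G l = (\<Sum>\<^sub>\<infinity>p\<in>Npos \<times> Npos. W j p * P (Suc m) n l (snd p) k)" for l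
  have G: "((\<lambda>p. W j p * P (Suc m) n l (snd p) k) has_sum G l) (Npos \<times> Npos)"
    "0 \<le> G l" "G l \<le> 1" if l: "l \<in> Npos" for l
  proof -
    have "0 \<le> P (Suc m) n l (snd p) k \<and> P (Suc m) n l (snd p) k \<le> 1"
      if "p \<in> Npos \<times> Npos" for p
      using that qsp_basic_nonneg[OF basic n l _ k] qsp_basic_le_one[OF basic n l _ k] by auto
    from has_sum_mult_unit_interval[OF W[OF j] W_nonneg[OF j] this] show
      "((\<lambda>p. W j p * P (Suc m) n l (snd p) k) has_sum G l) (Npos \<times> Npos)"
      "0 \<le> G l" "G l \<le> 1"
      unfolding G_def by simp_all
  qed
  have mixture: "((\<lambda>c. W i' c * G (snd c)) has_sum P m n i' j k) (Npos \<times> Npos)"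
    if i': "i' \<in> Npos" for i'
  proof (rule has_sum_Sigma')
    have "((\<lambda>(a, l, g, h).
          P m (Suc m) i' a l * P m (Suc m) j g h * P (Suc m) n l h k * x a * x g)
        has_sum P m n i' j k) (Npos \<times> Npos \<times> Npos \<times> Npos)"
      using TB n i' j k unfolding qsp_typeB_def x_def by auto
    also have "?this \<longleftrightarrow> ((\<lambda>(c, p). W i' c * (W j p * P (Suc m) n (snd c) (snd p) k))
        has_sum P m n i' j k) ((Npos \<times> Npos) \<times> (Npos \<times> Npos))"
      by (rule has_sum_reindex_bij_witness[where j="\<lambda>(a, l, g, h). ((a, l), (g, h))"
            and i="\<lambda>((a, l), (g, h)). (a, l, g, h)"])
        (auto simp: W_def mult_ac)
    finally show "((\<lambda>(c, p). W i' c * (W j p * P (Suc m) n (snd c) (snd p) k))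
        has_sum P m n i' j k) ((Npos \<times> Npos) \<times> (Npos \<times> Npos))" .
    show "((\<lambda>p. (\<lambda>(c, p). W i' c * (W j p * P (Suc m) n (snd c) (snd p) k)) (c, p))
        has_sum W i' c * G (snd c)) (Npos \<times> Npos)" if "c \<in> Npos \<times> Npos" for c
      using has_sum_cmult_right[OF G(1), of "snd c" "W i' c"] that by auto
  qed
  define \<mu> where "\<mu> = (\<lambda>(a, l). if l = k0 then L * x a else 0)"
  have \<mu>: "(\<mu> has_sum L) (Npos \<times> Npos)"
  proof (rule nonneg_has_sum_SigmaI)
    show "((\<lambda>a. L * x a) has_sum L) Npos"
      using has_sum_cmult_right[OF x(1), of L] by simp
    show "((\<lambda>l. \<mu> (a, l)) has_sum L * x a) Npos" for a
      by (rule has_sum_finite_neutralI[of "{k0}"]) (use k0 in \<open>auto simp: \<mu>_def\<close>)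
  qed (use x(2) \<open>0 \<le> L\<close> in \<open>auto simp: \<mu>_def\<close>)
  show ?thesis
  proof (rule minorized_mixture_diff_le[OF W[OF i] W[OF u] \<mu> _ _ _ mixture[OF i] mixture[OF u]])
    show "0 \<le> \<mu> c \<and> \<mu> c \<le> W i c \<and> \<mu> c \<le> W u c" if c_mem: "c \<in> Npos \<times> Npos" for c
    proof -
      obtain a l where c: "c = (a, l)" and a: "a \<in> Npos"
        using c_mem by auto
      have "L * x a \<le> W i' (a, k0)" if "i' \<in> Npos" for i'
        using mult_right_mono[OF minor[OF that a] x(2)[OF a]] by (simp add: W_def mult.commute)
      then show ?thesis
        using i u x(2)[OF a] \<open>0 \<le> L\<close> W_nonneg[OF i c_mem] W_nonneg[OF u c_mem]
        by (auto simp: \<mu>_def c)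
    qed
    show "G (snd c) - G (snd c') \<le> B" if "c \<in> Npos \<times> Npos" "c' \<in> Npos \<times> Npos" for c c'
      by (rule has_sum_mult_diff_le[OF W[OF j] W_nonneg[OF j] G(1) G(1)]) (use that osc in auto)
  qed (use G k in auto)
qed

lemma qsp_step_diff_le:
  assumes "qsp_typeA P x0 \<or> qsp_typeB P x0" and "Suc m < n" and "k \<in> Npos" and "k0 \<in> Npos"
    and "\<And>a b. a \<in> Npos \<Longrightarrow> b \<in> Npos \<Longrightarrow> L \<le> P m (Suc m) a b k0" and "0 \<le> L"
    and "\<And>a b c. a \<in> Npos \<Longrightarrow> b \<in> Npos \<Longrightarrow> c \<in> Npos \<Longrightarrow>
      P (Suc m) n a b k - P (Suc m) n c b k \<le> B"
    and "i \<in> Npos" and "j \<in> Npos" and "u \<in> Npos"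
  shows "P m n i j k - P m n u j k \<le> (1 - L) * B"
proof (cases "qsp_typeA P x0")
  case True
  then show ?thesis
    using assms(2-) by (rule typeA_step_diff_le)
next
  case False
  with assms(1) have "qsp_typeB P x0" by simp
  then show ?thesis
    using assms(2-) by (rule typeB_step_diff_le)
qed

lemma qsp_first_index_diff_le_prod:
  assumes T: "qsp_typeA P x0 \<or> qsp_typeB P x0" and k: "k \<in> Npos" and k0: "k0 \<in> Npos"
    and lam: "\<And>m. 0 \<le> lam (Suc m)"
    and minor: "\<And>m a b. a \<in> Npos \<Longrightarrow> b \<in> Npos \<Longrightarrow> lam (Suc m) \<le> P m (Suc m) a b k0"
    and "m < n" and "i \<in> Npos" and "j \<in> Npos" and "u \<in> Npos"
  shows "\<bar>P m n i j k - P m n u j k\<bar> \<le> (\<Prod>q\<in>{m<..<n}. 1 - lam q)"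
proof -
  have basic: "qsp_basic P x0"
    using T by (auto simp: qsp_typeA_def qsp_typeB_def)
  from \<open>m < n\<close> have "m \<le> n - 1" by simp
  then show ?thesis
    using \<open>m < n\<close> \<open>i \<in> Npos\<close> \<open>j \<in> Npos\<close> \<open>u \<in> Npos\<close>
  proof (induction m arbitrary: i j u rule: inc_induct)
    case base
    then have bounds: "0 \<le> P (n - 1) n a j k \<and> P (n - 1) n a j k \<le> 1" if "a \<in> Npos" for a
      using qsp_basic_nonneg[OF basic _ that _ k] qsp_basic_le_one[OF basic _ that _ k] by simp
    have "{n - 1<..<n} = {}" by auto
    with bounds[of i] bounds[of u] base.prems show ?case
      by (simp add: abs_le_iff)
  next
    case (step m)
    define B where "B = (\<Prod>q\<in>{Suc m<..<n}. 1 - lam q)"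
    have osc: "P (Suc m) n a b k - P (Suc m) n c b k \<le> B"
      if "a \<in> Npos" "b \<in> Npos" "c \<in> Npos" for a b c
      using step.IH[OF _ that] step.hyps unfolding B_def by (simp add: abs_le_iff)
    have "{m<..<n} = insert (Suc m) {Suc m<..<n}"
      using step.hyps by auto
    then have "(\<Prod>q\<in>{m<..<n}. 1 - lam q) = (1 - lam (Suc m)) * B"
      unfolding B_def by simp
    moreover have "P m n a j k - P m n c j k \<le> (1 - lam (Suc m)) * B"
      if "a \<in> Npos" "c \<in> Npos" for a c
      by (rule qsp_step_diff_le[OF T _ k k0 minor lam osc that(1) \<open>j \<in> Npos\<close> that(2)])
        (use step.hyps in auto)
    ultimately show ?case
      using step.prems by (simp add: abs_le_iff)
  qed
qed

lemma qsp_diff_le_prod: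
  assumes T: "qsp_typeA P x0 \<or> qsp_typeB P x0" and k: "k \<in> Npos" and k0: "k0 \<in> Npos"
    and lam: "\<And>m. 0 \<le> lam (Suc m)"
    and minor: "\<And>m a b. a \<in> Npos \<Longrightarrow> b \<in> Npos \<Longrightarrow> lam (Suc m) \<le> P m (Suc m) a b k0"
    and "m < n" and "i \<in> Npos" and "j \<in> Npos" and "u \<in> Npos" and "v \<in> Npos"
  shows "\<bar>P m n i j k - P m n u v k\<bar> \<le> 2 * (\<Prod>q\<in>{m<..<n}. 1 - lam q)"
proof -
  have basic: "qsp_basic P x0"
    using T by (auto simp: qsp_typeA_def qsp_typeB_def)
  note first_index = qsp_first_index_diff_le_prod[OF T k k0 lam minor \<open>m < n\<close>]
  have "P m n u j k = P m n j u k" "P m n u v k = P m n v u k"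
    using qsp_basic_sym[OF basic \<open>m < n\<close> _ _ k] assms(8-10) by auto
  then show ?thesis
    using first_index[of i j u] first_index[of j u v] assms(7-10) by (simp add: abs_le_iff)
qed

lemma prod_one_minus_tendsto_zero:
  fixes lam :: "nat \<Rightarrow> real"
  assumes "\<And>n. n \<ge> 1 \<Longrightarrow> 0 < lam n \<and> lam n < 1"
    and "(\<lambda>n. \<Sum>j=1..n. (\<Prod>k=1..n. 1 - lam k) / (1 - lam j)) \<longlonglongrightarrow> 0"
  shows "(\<lambda>n. \<Prod>k=1..n. 1 - lam k) \<longlonglongrightarrow> 0"
proof (rule tendsto_sandwich[OF _ _ tendsto_const assms(2)])
  have prod_nonneg: "0 \<le> (\<Prod>k=1..n. 1 - lam k)" for n
    using assms(1) by (intro prod_nonneg) (simp add: less_imp_le)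
  then show "\<forall>\<^sub>F n in sequentially. 0 \<le> (\<Prod>k=1..n. 1 - lam k)"
    by simp
  show "\<forall>\<^sub>F n in sequentially.
      (\<Prod>k=1..n. 1 - lam k) \<le> (\<Sum>j=1..n. (\<Prod>k=1..n. 1 - lam k) / (1 - lam j))"
  proof (rule eventually_sequentiallyI[of 1])
    fix n :: nat
    assume "1 \<le> n"
    have "(\<Prod>k=1..n. 1 - lam k) \<le> (\<Prod>k=1..n. 1 - lam k) / (1 - lam 1)"
      using assms(1)[of 1] prod_nonneg[of n] by (simp add: le_divide_eq mult_right_le_one_le)
    also have "\<dots> \<le> (\<Sum>j=1..n. (\<Prod>k=1..n. 1 - lam k) / (1 - lam j))"
    proof (rule member_le_sum)
      show "0 \<le> (\<Prod>k=1..n. 1 - lam k) / (1 - lam j)" if "j \<in> {1..n} - {1}" for j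
        using assms(1)[of j] that prod_nonneg[of n] by simp
    qed (use \<open>1 \<le> n\<close> in auto)
    finally show "(\<Prod>k=1..n. 1 - lam k) \<le> (\<Sum>j=1..n. (\<Prod>k=1..n. 1 - lam k) / (1 - lam j))" .
  qed
qed

lemma prod_greaterThanLessThan_tendsto_zero:
  fixes lam :: "nat \<Rightarrow> real"
  assumes "\<And>n. n \<ge> 1 \<Longrightarrow> lam n \<noteq> 1"
    and "(\<lambda>n. \<Prod>k=1..n. 1 - lam k) \<longlonglongrightarrow> 0"
  shows "(\<lambda>n. \<Prod>q\<in>{m<..<n}. 1 - lam q) \<longlonglongrightarrow> 0"
proof (rule Lim_transform_eventually)
  have head_nonzero: "(\<Prod>k=1..m. 1 - lam k) \<noteq> 0"
    using assms(1) by simp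
  have "(\<lambda>n. \<Prod>k=1..n - 1. 1 - lam k) \<longlonglongrightarrow> 0"
    by (rule LIMSEQ_imp_Suc) (use assms(2) in simp)
  then show "(\<lambda>n. (\<Prod>k=1..n - 1. 1 - lam k) / (\<Prod>k=1..m. 1 - lam k)) \<longlonglongrightarrow> 0"
    by (rule tendsto_divide_zero)
  show "\<forall>\<^sub>F n in sequentially.
      (\<Prod>k=1..n - 1. 1 - lam k) / (\<Prod>k=1..m. 1 - lam k) = (\<Prod>q\<in>{m<..<n}. 1 - lam q)"
  proof (rule eventually_sequentiallyI[of "Suc m"])
    fix n assume "Suc m \<le> n"
    then have "{1..n - 1} = {1..m} \<union> {m<..<n}" by auto
    then have "(\<Prod>k=1..n - 1. 1 - lam k) = (\<Prod>k=1..m. 1 - lam k) * (\<Prod>q\<in>{m<..<n}. 1 - lam q)"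
      by (simp add: prod.union_disjoint ivl_disj_int)
    then show "(\<Prod>k=1..n - 1. 1 - lam k) / (\<Prod>k=1..m. 1 - lam k) = (\<Prod>q\<in>{m<..<n}. 1 - lam q)"
      using head_nonzero by simp
  qed
qed

theorem theorem3p4:
  fixes P :: "nat \<Rightarrow> nat \<Rightarrow> nat \<Rightarrow> nat \<Rightarrow> nat \<Rightarrow> real"
    and x0 :: "nat \<Rightarrow> real" and lam :: "nat \<Rightarrow> real" and k0 :: nat
  assumes "qsp_typeA P x0 \<or> qsp_typeB P x0"
    and "k0 \<ge> 1"
    and "\<And>n. n \<ge> 1 \<Longrightarrow> 0 < lam n \<and> lam n < 1"
    and "\<not> summable (\<lambda>n. lam (Suc n))"
    and "(\<lambda>n. \<Sum>j=1..n. (\<Prod>k=1..n. 1 - lam k) / (1 - lam j)) \<longlonglongrightarrow> 0"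
    and "\<And>n i j. n \<ge> 1 \<Longrightarrow> i \<ge> 1 \<Longrightarrow> j \<ge> 1 \<Longrightarrow> P (n - 1) n i j k0 \<ge> lam n"
  shows "ergodic_principle P"
proof -
  have k0: "k0 \<in> Npos"
    using assms(2) by (simp add: Npos_def)
  have lam: "0 \<le> lam (Suc m)" for m
    using assms(3)[of "Suc m"] by simp
  have minor: "lam (Suc m) \<le> P m (Suc m) a b k0" if "a \<in> Npos" "b \<in> Npos" for m a b
    using assms(6)[of "Suc m" a b] that by (simp add: Npos_def)
  have tail: "(\<lambda>n. \<Prod>q\<in>{m<..<n}. 1 - lam q) \<longlonglongrightarrow> 0" for m
    using assms(3)
    by (intro prod_greaterThanLessThan_tendsto_zero prod_one_minus_tendsto_zero assms(5))
      (auto simp: less_imp_neq)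
  show ?thesis
    unfolding ergodic_principle_def
  proof (intro ballI allI)
    fix i j u v k m
    assume indices: "i \<in> Npos" "j \<in> Npos" "u \<in> Npos" "v \<in> Npos" and k: "k \<in> Npos"
    have "norm \<bar>P m n i j k - P m n u v k\<bar> \<le> 2 * (\<Prod>q\<in>{m<..<n}. 1 - lam q)" if "m < n" for n
      using qsp_diff_le_prod[OF assms(1) k k0 lam minor that indices] by simp
    with eventually_gt_at_top[of m] have "\<forall>\<^sub>F n in sequentially.
        norm \<bar>P m n i j k - P m n u v k\<bar> \<le> 2 * (\<Prod>q\<in>{m<..<n}. 1 - lam q)"
      by (rule eventually_mono)
    then show "(\<lambda>n. \<bar>P m n i j k - P m n u v k\<bar>) \<longlonglongrightarrow> 0"
      by (rule Lim_null_comparison) (use tendsto_mult_right_zero[OF tail] in simp)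
  qed
qed

end
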